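(* Let $X$ be a separable completely metrizable space and $T:X\to X$ continuous. The following are equivalent: (i) $T$ is quasi-rigid; (ii) $T$ is topologically quasi-rigid; (iii) $T_{(N)}$ is topologically recurrent for every $N\in\mathbb{N}$; (iv) $T_{(N)}$ is recurrent for every $N\in\mathbb{N}$.
   Context: For $N\in\mathbb{N}$, $T_{(N)}:X^N\to X^N$, $T_{(N)}(x_1,\dots,x_N)=(Tx_1,\dots,Tx_N)$. A point $x$ is recurrent for a map $S$ if $x\in\overline{\{S^nx:n\geq1\}}$; $S$ is recurrent if its set of recurrent points is dense. $S$ is topologically recurrent if for every non-empty open $U$ there is $n\in\mathbb{N}$ with $S^n(U)\cap U\neq\varnothing$. $T$ is quasi-rigid if there exist a strictly increasing sequence $(n_k)$ of positive integers and a dense $Y\subset X$ with $T^{n_k}x\to x$ for all $x\in Y$. $T$ is topologically quasi-rigid if there exists a strictly increasing sequence $(n_k)$ such that for every non-empty open $U$ there is $k_U$ with $T^{n_k}(U)\cap U\neq\varnothing$ for all $k\geq k_U$. *)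

theory Defs
  imports "HOL-Analysis.Analysis"
begin

definition recurrent_point :: "'a topology \<Rightarrow> ('a \<Rightarrow> 'a) \<Rightarrow> 'a \<Rightarrow> bool" where
  "recurrent_point X S x \<longleftrightarrow> x \<in> X closure_of {(S ^^ n) x | n. n \<ge> 1}"

definition recurrent_map :: "'a topology \<Rightarrow> ('a \<Rightarrow> 'a) \<Rightarrow> bool" where
  "recurrent_map X S \<longleftrightarrow>
     X closure_of {x \<in> topspace X. recurrent_point X S x} = topspace X"

definition topologically_recurrent :: "'a topology \<Rightarrow> ('a \<Rightarrow> 'a) \<Rightarrow> bool" where
  "topologically_recurrent X S \<longleftrightarrow>
     (\<forall>U. openin X U \<and> U \<noteq> {} \<longrightarrow> (\<exists>n::nat. n \<ge> 1 \<and> (S ^^ n) ` U \<inter> U \<noteq> {}))"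

definition quasi_rigid :: "'a topology \<Rightarrow> ('a \<Rightarrow> 'a) \<Rightarrow> bool" where
  "quasi_rigid X T \<longleftrightarrow>
     (\<exists>(nk :: nat \<Rightarrow> nat) Y. strict_mono nk \<and> (\<forall>k. 0 < nk k) \<and>
        Y \<subseteq> topspace X \<and> X closure_of Y = topspace X \<and>
        (\<forall>x\<in>Y. limitin X (\<lambda>k. (T ^^ nk k) x) x sequentially))"

definition topologically_quasi_rigid :: "'a topology \<Rightarrow> ('a \<Rightarrow> 'a) \<Rightarrow> bool" where
  "topologically_quasi_rigid X T \<longleftrightarrow>
     (\<exists>nk :: nat \<Rightarrow> nat. strict_mono nk \<and> (\<forall>k. 0 < nk k) \<and>
        (\<forall>U. openin X U \<and> U \<noteq> {} \<longrightarrow>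
           (\<exists>kU. \<forall>k\<ge>kU. (T ^^ nk k) ` U \<inter> U \<noteq> {})))"

text \<open>X^N as the product topology on functions indexed by {..<N} (extensional),
  and the diagonal map T_(N).\<close>

definition power_top :: "'a topology \<Rightarrow> nat \<Rightarrow> (nat \<Rightarrow> 'a) topology" where
  "power_top X N = product_topology (\<lambda>_. X) {..<N}"

definition power_map :: "('a \<Rightarrow> 'a) \<Rightarrow> nat \<Rightarrow> (nat \<Rightarrow> 'a) \<Rightarrow> (nat \<Rightarrow> 'a)" where
  "power_map T N x = restrict (\<lambda>i. T (x i)) {..<N}"

end

theory Submission
  imports Defs
begin

text \<open>
  Both kinds of quasi-rigidity pass from T to every T_(N) along the same sequence, which gives
  (i) \<Rightarrow> (iv) and (ii) \<Rightarrow> (iii); (i) \<Rightarrow> (ii) and (iv) \<Rightarrow> (iii) hold for any map.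
  The substance is (iii) \<Rightarrow> (i). Topological recurrence of all finite powers makes the diagonal
  map y \<mapsto> T \<circ> y on the completely metrizable space X^\<nat> topologically recurrent. By Baire's
  theorem a generic y \<in> X^\<nat> lies both in the dense open sets of points that return
  1/(q+1)-close after time K, and in the dense open sets of points having some coordinate in a
  given ball around a point of a countable dense subset of X. Such a y satisfies
  T^(n_k) \<circ> y \<rightarrow> y for some strictly increasing (n_k), and its coordinates form a dense set
  Y witnessing the quasi-rigidity of T.
\<close>

lemma continuous_map_funpow:
  assumes "continuous_map X X S"
  shows "continuous_map X X (S ^^ n)"
  by (induction n) (simp_all add: continuous_map_compose[OF _ assms, unfolded o_def])

lemma funpow_power_map:
  assumes "0 < n"
  shows "(power_map T N ^^ n) x = restrict (\<lambda>i. (T ^^ n) (x i)) {..<N}"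
  using assms
proof (induction n arbitrary: x)
  case (Suc n)
  then show ?case
    by (cases "n = 0") (simp_all add: power_map_def fun_eq_iff funpow_Suc_right del: funpow.simps)
qed simp

lemma funpow_diagonal:
  fixes T :: "'a \<Rightarrow> 'a"
  shows "(\<lambda>y i. T (y i)) ^^ n = (\<lambda>(y :: 'i \<Rightarrow> 'a) i. (T ^^ n) (y i))"
proof (induction n)
  case (Suc n)
  then show ?case
    by (simp add: funpow_Suc_right o_def del: funpow.simps(2))
qed (simp add: id_def)

lemma recurrent_point_if_limitin:
  assumes "limitin X (\<lambda>k. (S ^^ nk k) x) x sequentially" and "\<forall>k. 0 < nk k"
  shows "recurrent_point X S x"
  unfolding recurrent_point_def in_closure_of
proof (intro conjI allI impI)
  show "x \<in> topspace X"
    using assms(1) by (rule limitin_topspace)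
  fix U assume "x \<in> U \<and> openin X U"
  then obtain K where "\<forall>k\<ge>K. (S ^^ nk k) x \<in> U"
    using assms(1) unfolding limitin_def eventually_sequentially by blast
  moreover have "nk K \<ge> 1"
    using assms(2) by (simp add: Suc_le_eq)
  ultimately show "\<exists>y. y \<in> {(S ^^ n) x |n. n \<ge> 1} \<and> y \<in> U"
    by blast
qed

lemma quasi_rigid_imp_recurrent_map:
  assumes "quasi_rigid X S"
  shows "recurrent_map X S"
proof -
  obtain nk :: "nat \<Rightarrow> nat" and Y where nk: "\<forall>k. 0 < nk k"
    and Y: "Y \<subseteq> topspace X" "X closure_of Y = topspace X"
    and lim: "\<forall>x\<in>Y. limitin X (\<lambda>k. (S ^^ nk k) x) x sequentially"
    using assms unfolding quasi_rigid_def by blast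
  have "recurrent_point X S x" if "x \<in> Y" for x
    using recurrent_point_if_limitin[OF bspec[OF lim that] nk] .
  then have "Y \<subseteq> {x \<in> topspace X. recurrent_point X S x}"
    using Y(1) by blast
  then have "X closure_of Y \<subseteq> X closure_of {x \<in> topspace X. recurrent_point X S x}"
    by (rule closure_of_mono)
  then show ?thesis
    unfolding recurrent_map_def using Y(2) by (simp add: closure_of_subset_topspace subset_antisym)
qed

lemma recurrent_map_imp_topologically_recurrent:
  assumes "recurrent_map X S"
  shows "topologically_recurrent X S"
  unfolding topologically_recurrent_def
proof (intro allI impI)
  fix U assume U: "openin X U \<and> U \<noteq> {}"
  then obtain x where x: "x \<in> U" "recurrent_point X S x"
    using assms unfolding recurrent_map_def dense_intersects_open by blast
  then obtain n where "n \<ge> 1" "(S ^^ n) x \<in> U"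
    using U unfolding recurrent_point_def in_closure_of by blast
  then show "\<exists>n\<ge>1. (S ^^ n) ` U \<inter> U \<noteq> {}"
    using x by blast
qed

lemma quasi_rigid_imp_topologically_quasi_rigid:
  assumes "quasi_rigid X T"
  shows "topologically_quasi_rigid X T"
proof -
  obtain nk :: "nat \<Rightarrow> nat" and Y where nk: "strict_mono nk" "\<forall>k. 0 < nk k"
    and Y: "X closure_of Y = topspace X"
    and lim: "\<forall>x\<in>Y. limitin X (\<lambda>k. (T ^^ nk k) x) x sequentially"
    using assms unfolding quasi_rigid_def by blast
  have "\<exists>kU. \<forall>k\<ge>kU. (T ^^ nk k) ` U \<inter> U \<noteq> {}" if U: "openin X U" "U \<noteq> {}" for U
  proof -
    obtain y where y: "y \<in> Y" "y \<in> U"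
      using Y U unfolding dense_intersects_open by blast
    then obtain kU where "\<forall>k\<ge>kU. (T ^^ nk k) y \<in> U"
      using lim U unfolding limitin_def eventually_sequentially by blast
    then show ?thesis
      using y by blast
  qed
  then show ?thesis
    unfolding topologically_quasi_rigid_def using nk by blast
qed

lemma topologically_quasi_rigid_imp_topologically_recurrent:
  assumes "topologically_quasi_rigid X T"
  shows "topologically_recurrent X T"
  unfolding topologically_recurrent_def
proof (intro allI impI)
  obtain nk :: "nat \<Rightarrow> nat" where nk: "\<forall>k. 0 < nk k"
    and ret: "\<forall>U. openin X U \<and> U \<noteq> {} \<longrightarrow> (\<exists>kU. \<forall>k\<ge>kU. (T ^^ nk k) ` U \<inter> U \<noteq> {})"
    using assms unfolding topologically_quasi_rigid_def by blast
  fix U assume "openin X U \<and> U \<noteq> {}"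
  then obtain kU where "\<forall>k\<ge>kU. (T ^^ nk k) ` U \<inter> U \<noteq> {}"
    using ret by blast
  then have "(T ^^ nk kU) ` U \<inter> U \<noteq> {}"
    by simp
  moreover have "nk kU \<ge> 1"
    using nk by (simp add: Suc_le_eq)
  ultimately show "\<exists>n\<ge>1. (T ^^ n) ` U \<inter> U \<noteq> {}"
    by (intro exI[of _ "nk kU"] conjI)
qed

lemma quasi_rigid_power_map:
  assumes "quasi_rigid X T"
  shows "quasi_rigid (power_top X N) (power_map T N)"
proof -
  obtain nk :: "nat \<Rightarrow> nat" and Y where nk: "strict_mono nk" "\<forall>k. 0 < nk k"
    and Y: "Y \<subseteq> topspace X" "X closure_of Y = topspace X"
    and lim: "\<forall>x\<in>Y. limitin X (\<lambda>k. (T ^^ nk k) x) x sequentially"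
    using assms unfolding quasi_rigid_def by blast
  define Z where "Z = PiE {..<N} (\<lambda>_. Y)"
  have "Z \<subseteq> topspace (power_top X N)"
    using Y(1) by (auto simp: Z_def power_top_def PiE_iff)
  moreover have "power_top X N closure_of Z = topspace (power_top X N)"
    using Y(2) by (simp add: Z_def power_top_def closure_of_product_topology)
  moreover have "limitin (power_top X N) (\<lambda>k. (power_map T N ^^ nk k) z) z sequentially"
    if "z \<in> Z" for z
  proof -
    have lim_i: "limitin X (\<lambda>k. (T ^^ nk k) (z i)) (z i) sequentially" if "i < N" for i
      using lim \<open>z \<in> Z\<close> that by (auto simp: Z_def)
    have "eventually (\<lambda>k. (T ^^ nk k) (z i) \<in> topspace X) sequentially" if "i < N" for i
      using lim_i[OF that] unfolding limitin_def by blast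
    then have "eventually (\<lambda>k. \<forall>i\<in>{..<N}. (T ^^ nk k) (z i) \<in> topspace X) sequentially"
      by (intro eventually_ball_finite) auto
    then show ?thesis
      unfolding power_top_def limitin_componentwise
      using \<open>z \<in> Z\<close> lim_i nk(2)
      by (auto simp: Z_def funpow_power_map PiE_iff elim!: eventually_mono)
  qed
  ultimately show ?thesis
    unfolding quasi_rigid_def using nk by (intro exI[of _ nk] exI[of _ Z]) auto
qed

lemma topologically_quasi_rigid_power_map:
  assumes "topologically_quasi_rigid X T"
  shows "topologically_quasi_rigid (power_top X N) (power_map T N)"
proof -
  obtain nk :: "nat \<Rightarrow> nat" where nk: "strict_mono nk" "\<forall>k. 0 < nk k"
    and ret: "\<forall>U. openin X U \<and> U \<noteq> {} \<longrightarrow> (\<exists>kU. \<forall>k\<ge>kU. (T ^^ nk k) ` U \<inter> U \<noteq> {})"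
    using assms unfolding topologically_quasi_rigid_def by blast
  have "\<exists>kW. \<forall>k\<ge>kW. (power_map T N ^^ nk k) ` W \<inter> W \<noteq> {}"
    if W: "openin (power_top X N) W" "W \<noteq> {}" for W
  proof -
    obtain w where "w \<in> W"
      using W(2) by blast
    then obtain U where U: "\<forall>i\<in>{..<N}. openin X (U i)" "w \<in> PiE {..<N} U" "PiE {..<N} U \<subseteq> W"
      using W(1) unfolding power_top_def openin_product_topology_alt by blast
    have "\<exists>kU. \<forall>k\<ge>kU. (T ^^ nk k) ` U i \<inter> U i \<noteq> {}" if "i < N" for i
    proof -
      have "openin X (U i)" "U i \<noteq> {}"
        using U(1,2) that by (auto simp: PiE_iff)
      then show ?thesis
        using ret by blast
    qed
    then obtain kU where kU: "\<And>i k. i < N \<Longrightarrow> k \<ge> kU i \<Longrightarrow> (T ^^ nk k) ` U i \<inter> U i \<noteq> {}"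
      by metis
    have "(power_map T N ^^ nk k) ` W \<inter> W \<noteq> {}" if k: "k \<ge> (\<Sum>i<N. kU i)" for k
    proof -
      have "kU i \<le> k" if "i < N" for i
        using k member_le_sum[of i "{..<N}" kU] that by simp
      then have "\<forall>i<N. \<exists>x. x \<in> U i \<and> (T ^^ nk k) x \<in> U i"
        using kU by blast
      then obtain x where x: "\<And>i. i < N \<Longrightarrow> x i \<in> U i \<and> (T ^^ nk k) (x i) \<in> U i"
        by metis
      have "restrict x {..<N} \<in> PiE {..<N} U"
        using x by (simp add: PiE_iff)
      moreover have "(power_map T N ^^ nk k) (restrict x {..<N}) \<in> PiE {..<N} U"
        using x nk(2) by (simp add: PiE_iff funpow_power_map)
      ultimately show ?thesis
        using U(3) by blast
    qed
    then show ?thesis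
      by blast
  qed
  then show ?thesis
    unfolding topologically_quasi_rigid_def using nk by blast
qed

lemma topologically_recurrent_returns_after:
  assumes "continuous_map X X S" and "topologically_recurrent X S"
    and "openin X W" and "W \<noteq> {}"
  shows "\<exists>n\<ge>K. n \<ge> 1 \<and> (S ^^ n) ` W \<inter> W \<noteq> {}"
  using assms(3,4)
proof (induction K arbitrary: W)
  case 0
  then show ?case
    using assms(2) unfolding topologically_recurrent_def by simp
next
  case (Suc K)
  then obtain n x where n: "n \<ge> K" "n \<ge> 1" and x: "x \<in> W" "(S ^^ n) x \<in> W"
    by blast
  \<comment> \<open>a return of \<open>W \<inter> S\<^sup>-\<^sup>n W\<close> within \<open>W\<close> is a return of \<open>W\<close> after time \<open>n + 1\<close>\<close>
  define W' where "W' = W \<inter> {y \<in> topspace X. (S ^^ n) y \<in> W}"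
  have "openin X W'"
    unfolding W'_def
    by (intro openin_Int Suc.prems(1)
        openin_continuous_map_preimage[OF continuous_map_funpow[OF assms(1)]])
  moreover have "x \<in> W'"
    using x openin_subset[OF Suc.prems(1)] unfolding W'_def by blast
  ultimately obtain m z where m: "m \<ge> 1" "z \<in> W'" "(S ^^ m) z \<in> W'"
    using assms(2) unfolding topologically_recurrent_def by blast
  then have "(S ^^ (n + m)) z \<in> W" "z \<in> W"
    unfolding W'_def by (simp_all add: funpow_add)
  then show ?case
    using n m(1) by (intro exI[of _ "n + m"]) auto
qed

context Metric_space
begin

lemma openin_near_returns:
  assumes "continuous_map mtopology mtopology S"
  shows "openin mtopology {y \<in> M. \<exists>n\<ge>K. n \<ge> 1 \<and> d ((S ^^ n) y) y < e}"
proof -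
  have "continuous_map mtopology euclidean (\<lambda>y. d ((S ^^ n) y) y)" for n
    using continuous_map_mdist[of mtopology "metric (M, d)"] continuous_map_funpow[OF assms]
    by simp
  then have "openin mtopology {y \<in> topspace mtopology. d ((S ^^ n) y) y \<in> {..<e}}" for n
    by (rule openin_continuous_map_preimage) simp
  then have "openin mtopology {y \<in> M. d ((S ^^ n) y) y \<in> {..<e}}" for n
    by simp
  moreover have "{y \<in> M. \<exists>n\<ge>K. n \<ge> 1 \<and> d ((S ^^ n) y) y < e}
      = (\<Union>n\<in>{n. n \<ge> K \<and> n \<ge> 1}. {y \<in> M. d ((S ^^ n) y) y \<in> {..<e}})"
    by auto
  ultimately show ?thesis
    by auto
qed

lemma dense_near_returns:
  assumes "continuous_map mtopology mtopology S" and "topologically_recurrent mtopology S"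
    and "0 < e"
  shows "mtopology closure_of {y \<in> M. \<exists>n\<ge>K. n \<ge> 1 \<and> d ((S ^^ n) y) y < e} = M"
  unfolding dense_intersects_open[of mtopology, unfolded topspace_mtopology]
proof (intro allI impI)
  fix W assume W: "openin mtopology W \<and> W \<noteq> {}"
  then obtain y0 r where y0: "y0 \<in> W" and r: "0 < r" "mball y0 r \<subseteq> W"
    unfolding openin_mtopology by blast
  define B where "B = mball y0 (min r (e / 2))"
  have "openin mtopology B" "B \<noteq> {}"
    using y0 r W \<open>0 < e\<close> openin_subset unfolding B_def by fastforce+
  then obtain n z where n: "n \<ge> K" "n \<ge> 1" and z: "z \<in> B" "(S ^^ n) z \<in> B"
    using topologically_recurrent_returns_after[OF assms(1,2)] by blast
  have "d ((S ^^ n) z) z \<le> d ((S ^^ n) z) y0 + d y0 z"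
    using z unfolding B_def by (intro triangle) auto
  also have "\<dots> < e"
    using z unfolding B_def by (simp add: commute)
  finally have "d ((S ^^ n) z) z < e" .
  moreover have "z \<in> W" "z \<in> M"
    using z r unfolding B_def by auto
  ultimately show "{y \<in> M. \<exists>n\<ge>K. n \<ge> 1 \<and> d ((S ^^ n) y) y < e} \<inter> W \<noteq> {}"
    using n by blast
qed

lemma limitin_subsequence_if_near_returns:
  assumes "continuous_map mtopology mtopology S" and "y \<in> M"
    and near: "\<And>K q. \<exists>n\<ge>K. n \<ge> 1 \<and> d ((S ^^ n) y) y < inverse (real (Suc q))"
  shows "\<exists>s. strict_mono s \<and> (\<forall>j. 0 < s j) \<and> limitin mtopology (\<lambda>j. (S ^^ s j) y) y sequentially"
proof -
  obtain s where s: "\<And>j. s j \<ge> 1 \<and> d ((S ^^ s j) y) y < inverse (real (Suc j)) \<and> s j < s (Suc j)"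
    using dependent_nat_choice[of "\<lambda>j n. n \<ge> 1 \<and> d ((S ^^ n) y) y < inverse (real (Suc j))"
        "\<lambda>_ n m. n < m"] near by (metis Suc_le_eq)
  have "(S ^^ n) y \<in> M" for n
    using continuous_map_image_subset_topspace[OF continuous_map_funpow[OF assms(1)]] \<open>y \<in> M\<close>
    by auto
  moreover have "eventually (\<lambda>j. d ((S ^^ s j) y) y < \<epsilon>) sequentially" if \<epsilon>: "0 < \<epsilon>" for \<epsilon>
  proof -
    obtain q where q: "inverse (real (Suc q)) < \<epsilon>"
      using reals_Archimedean[OF \<epsilon>] by blast
    have "d ((S ^^ s j) y) y < \<epsilon>" if "j \<ge> q" for j
    proof -
      have "inverse (real (Suc j)) \<le> inverse (real (Suc q))"
        using that by (simp add: le_imp_inverse_le)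
      then show ?thesis
        using s[of j] q by linarith
    qed
    then show ?thesis
      unfolding eventually_sequentially by blast
  qed
  ultimately have "limitin mtopology (\<lambda>j. (S ^^ s j) y) y sequentially"
    unfolding limitin_metric using \<open>y \<in> M\<close> by simp
  moreover have "strict_mono s"
    using s by (simp add: strict_mono_Suc_iff)
  moreover have "\<forall>j. 0 < s j"
    using s by (simp add: Suc_le_eq)
  ultimately show ?thesis
    by blast
qed

lemma exists_rigid_point_in_dense_Inter:
  assumes "mcomplete" and "M \<noteq> {}"
    and S: "continuous_map mtopology mtopology S" "topologically_recurrent mtopology S"
    and "countable \<D>" and \<D>: "\<And>D. D \<in> \<D> \<Longrightarrow> openin mtopology D \<and> mtopology closure_of D = M"
  shows "\<exists>y\<in>\<Inter>\<D>. y \<in> M \<and>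
           (\<exists>s. strict_mono s \<and> (\<forall>j. 0 < s j) \<and> limitin mtopology (\<lambda>j. (S ^^ s j) y) y sequentially)"
proof -
  define G where
    "G = (\<lambda>p. {y \<in> M. \<exists>n\<ge>fst p. n \<ge> 1 \<and> d ((S ^^ n) y) y < inverse (real (Suc (snd p)))})"
  have "openin mtopology A \<and> mtopology closure_of A = topspace mtopology" if "A \<in> range G \<union> \<D>" for A
    using that \<D> openin_near_returns[OF S(1)] dense_near_returns[OF S] unfolding G_def by auto
  then have "mtopology closure_of \<Inter>(range G \<union> \<D>) = topspace mtopology"
    using \<open>countable \<D>\<close>
    by (intro Baire_category disjI1 completely_metrizable_space_mtopology[OF \<open>mcomplete\<close>]) auto
  then have "\<Inter>(range G \<union> \<D>) \<noteq> {}"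
    using \<open>M \<noteq> {}\<close> by force
  then obtain y where y: "y \<in> \<Inter>(range G \<union> \<D>)"
    by blast
  then have "y \<in> G (K, q)" for K q
    by auto
  then have "y \<in> M" and "\<exists>n\<ge>K. n \<ge> 1 \<and> d ((S ^^ n) y) y < inverse (real (Suc q))" for K q
    unfolding G_def by auto
  moreover have "y \<in> \<Inter>\<D>"
    using y by blast
  ultimately show ?thesis
    using limitin_subsequence_if_near_returns[OF S(1)] by blast
qed

end

lemma topologically_recurrent_diagonal:
  assumes T: "continuous_map X X T"
    and rec: "\<forall>N\<ge>1. topologically_recurrent (power_top X N) (power_map T N)"
  shows "topologically_recurrent (product_topology (\<lambda>_::nat. X) UNIV) (\<lambda>y i. T (y i))"
  unfolding topologically_recurrent_def funpow_diagonal
proof (intro allI impI)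
  fix W assume W: "openin (product_topology (\<lambda>_::nat. X) UNIV) W \<and> W \<noteq> {}"
  then obtain y0 where "y0 \<in> W"
    by blast
  then obtain U :: "nat \<Rightarrow> 'a set"
    where U: "finite {i \<in> UNIV. U i \<noteq> topspace X}" "\<forall>i\<in>UNIV. openin X (U i)"
      "y0 \<in> PiE UNIV U" "PiE UNIV U \<subseteq> W"
    using W unfolding openin_product_topology_alt by blast
  obtain N0 where "{i \<in> UNIV. U i \<noteq> topspace X} \<subseteq> {..<N0}"
    using finite_nat_bounded[OF U(1)] by blast
  then have U_top: "U i = topspace X" if "i \<ge> Suc N0" for i
    using that by auto
  define B where "B = PiE {..<Suc N0} U"
  have "restrict y0 {..<Suc N0} \<in> B"
    using U(3) by (simp add: B_def PiE_iff)
  then have "B \<noteq> {}"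
    by blast
  moreover have "openin (power_top X (Suc N0)) B"
    unfolding B_def power_top_def openin_PiE_gen using U(2) by simp
  moreover have "topologically_recurrent (power_top X (Suc N0)) (power_map T (Suc N0))"
    using rec by simp
  ultimately obtain n where n: "n \<ge> 1" "(power_map T (Suc N0) ^^ n) ` B \<inter> B \<noteq> {}"
    unfolding topologically_recurrent_def by meson
  then obtain x where x: "x \<in> B" "(power_map T (Suc N0) ^^ n) x \<in> B"
    by auto
  define z where "z = (\<lambda>i. if i < Suc N0 then x i else y0 i)"
  have "z \<in> PiE UNIV U"
    using x(1) U(3) by (auto simp: z_def B_def PiE_iff)
  moreover have "(T ^^ n) (z i) \<in> U i" for i
  proof (cases "i < Suc N0")
    case True
    then show ?thesis
      using x(2) \<open>n \<ge> 1\<close> by (simp add: z_def B_def PiE_iff funpow_power_map)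
  next
    case False
    then have "U i = topspace X"
      using U_top by simp
    moreover have "y0 i \<in> U i"
      using U(3) by (simp add: PiE_iff)
    ultimately show ?thesis
      using False continuous_map_image_subset_topspace[OF continuous_map_funpow[OF T, of n]]
      by (auto simp: z_def)
  qed
  then have "(\<lambda>i. (T ^^ n) (z i)) \<in> PiE UNIV U"
    by (simp add: PiE_iff)
  ultimately have "z \<in> W" "(\<lambda>i. (T ^^ n) (z i)) \<in> W"
    using U(4) by blast+
  then have "(\<lambda>i. (T ^^ n) (z i)) \<in> (\<lambda>y i. (T ^^ n) (y i)) ` W \<inter> W"
    by blast
  then show "\<exists>n\<ge>1. (\<lambda>y i. (T ^^ n) (y i)) ` W \<inter> W \<noteq> {}"
    using n(1) by blast
qed

lemma openin_dense_exists_coordinate_in: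
  assumes "infinite (UNIV :: 'i set)" and "openin X U" and "U \<noteq> {}"
  defines "P \<equiv> product_topology (\<lambda>_::'i. X) UNIV"
  shows "openin P {y \<in> topspace P. \<exists>i. y i \<in> U}"
    and "P closure_of {y \<in> topspace P. \<exists>i. y i \<in> U} = topspace P"
proof -
  have "openin P {y \<in> topspace P. y i \<in> U}" for i
    unfolding P_def
    using openin_continuous_map_preimage[OF continuous_map_product_projection[of i] \<open>openin X U\<close>]
    by simp
  moreover have "{y \<in> topspace P. \<exists>i. y i \<in> U} = (\<Union>i. {y \<in> topspace P. y i \<in> U})"
    by auto
  ultimately show "openin P {y \<in> topspace P. \<exists>i. y i \<in> U}"
    by auto
  obtain u where u: "u \<in> U" "u \<in> topspace X"
    using assms(2,3) openin_subset by blast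
  show "P closure_of {y \<in> topspace P. \<exists>i. y i \<in> U} = topspace P"
    unfolding dense_intersects_open
  proof (intro allI impI)
    fix W assume W: "openin P W \<and> W \<noteq> {}"
    then obtain y0 where "y0 \<in> W"
      by blast
    then obtain V :: "'i \<Rightarrow> 'a set"
      where V: "finite {i \<in> UNIV. V i \<noteq> topspace X}" "\<forall>i\<in>UNIV. openin X (V i)"
        "y0 \<in> PiE UNIV V" "PiE UNIV V \<subseteq> W"
      using W unfolding P_def openin_product_topology_alt by blast
    obtain i where "i \<notin> {i \<in> UNIV. V i \<noteq> topspace X}"
      using ex_new_if_finite[OF assms(1) V(1)] by blast
    then have "y0(i := u) \<in> PiE UNIV V"
      using V(3) u by (auto simp: PiE_iff)
    then have "y0(i := u) \<in> W" "y0(i := u) \<in> topspace P"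
      using V(4) W openin_subset by blast+
    then show "{y \<in> topspace P. \<exists>i. y i \<in> U} \<inter> W \<noteq> {}"
      using u by (auto intro!: exI[of _ i])
  qed
qed

lemma (in Metric_space) dense_if_meets_small_balls:
  assumes "mtopology closure_of C = M" and "A \<subseteq> M"
    and meets: "\<And>c q. c \<in> C \<Longrightarrow> A \<inter> mball c (inverse (real (Suc q))) \<noteq> {}"
  shows "mtopology closure_of A = M"
  unfolding dense_intersects_open[of mtopology, unfolded topspace_mtopology]
proof (intro allI impI)
  fix W assume W: "openin mtopology W \<and> W \<noteq> {}"
  then obtain x r where x: "x \<in> W" and r: "0 < r" "mball x r \<subseteq> W"
    unfolding openin_mtopology by blast
  then have "x \<in> mtopology closure_of C" "openin mtopology (mball x (r / 2))" "x \<in> mball x (r / 2)"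
    using assms(1) W openin_subset by (fastforce simp: r(1))+
  then obtain c where c: "c \<in> C" "c \<in> mball x (r / 2)"
    unfolding in_closure_of by meson
  obtain q where q: "inverse (real (Suc q)) < r / 2"
    using reals_Archimedean[of "r / 2"] r(1) by auto
  obtain a where a: "a \<in> A" "a \<in> mball c (inverse (real (Suc q)))"
    using meets[OF c(1)] by blast
  have "d x a \<le> d x c + d c a"
    using a c by (intro triangle) auto
  also have "\<dots> < r"
    using a c q by simp
  finally have "a \<in> mball x r"
    using a c by simp
  then show "A \<inter> W \<noteq> {}"
    using a r(2) by blast
qed

lemma countable_dense_open_family_dense_coordinates:
  assumes "metrizable_space X" and "separable_space X"
  defines "P \<equiv> product_topology (\<lambda>_::nat. X) UNIV"
  obtains \<D> where "countable \<D>"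
    and "\<And>D. D \<in> \<D> \<Longrightarrow> openin P D \<and> P closure_of D = topspace P"
    and "\<And>y. y \<in> topspace P \<Longrightarrow> y \<in> \<Inter>\<D> \<Longrightarrow> X closure_of range y = topspace X"
proof -
  obtain MX dX where "Metric_space MX dX" and X: "X = Metric_space.mtopology MX dX"
    using assms(1) unfolding metrizable_space_def by blast
  interpret X: Metric_space MX dX
    by fact
  obtain C where C: "countable C" "C \<subseteq> MX" "X.mtopology closure_of C = MX"
    using assms(2) unfolding separable_space_def X by auto
  define D where "D = (\<lambda>(c, q). {y \<in> topspace P. \<exists>i. y i \<in> X.mball c (inverse (real (Suc q)))})"
  have "openin P (D cq) \<and> P closure_of D cq = topspace P" if "cq \<in> C \<times> UNIV" for cq
  proof -
    obtain c q where cq: "cq = (c, q)" "c \<in> MX"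
      using \<open>cq \<in> C \<times> UNIV\<close> C(2) by auto
    define B where "B = X.mball c (inverse (real (Suc q)))"
    have "openin X B" "c \<in> B"
      using cq(2) unfolding B_def X by auto
    then have "openin P {y \<in> topspace P. \<exists>i. y i \<in> B} \<and>
        P closure_of {y \<in> topspace P. \<exists>i. y i \<in> B} = topspace P"
      using openin_dense_exists_coordinate_in[OF infinite_UNIV_nat, of X B] unfolding P_def by blast
    then show ?thesis
      unfolding D_def cq(1) B_def by simp
  qed
  moreover have "X closure_of range y = topspace X"
    if "y \<in> topspace P" "y \<in> \<Inter>(D ` (C \<times> UNIV))" for y
  proof -
    have "range y \<subseteq> MX"
      using that(1) unfolding P_def X by auto
    moreover have "range y \<inter> X.mball c (inverse (real (Suc q))) \<noteq> {}" if "c \<in> C" for c q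
    proof -
      have "y \<in> D (c, q)"
        using \<open>y \<in> \<Inter>(D ` (C \<times> UNIV))\<close> that by blast
      then show ?thesis
        unfolding D_def by blast
    qed
    ultimately show ?thesis
      using X.dense_if_meets_small_balls[OF C(3)] unfolding X by simp
  qed
  ultimately show ?thesis
    using that[of "D ` (C \<times> UNIV)"] C(1) by blast
qed

lemma quasi_rigid_if_powers_topologically_recurrent:
  assumes "completely_metrizable_space X" and "separable_space X" and T: "continuous_map X X T"
    and rec: "\<forall>N\<ge>1. topologically_recurrent (power_top X N) (power_map T N)"
  shows "quasi_rigid X T"
proof (cases "topspace X = {}")
  case True
  then show ?thesis
    unfolding quasi_rigid_def
    by (intro exI[of _ Suc] exI[of _ "{}"]) (simp add: strict_mono_Suc_iff)
next
  case False
  define P where "P = product_topology (\<lambda>_::nat. X) UNIV"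
  obtain M d where "Metric_space M d" "Metric_space.mcomplete M d"
    and P_metric: "P = Metric_space.mtopology M d"
    using completely_metrizable_space_product_topology[of "\<lambda>_::nat. X" UNIV] assms(1)
    unfolding P_def completely_metrizable_space_def by auto
  interpret P: Metric_space M d
    by fact
  obtain \<D> where "countable \<D>" and \<D>: "\<And>D. D \<in> \<D> \<Longrightarrow> openin P D \<and> P closure_of D = topspace P"
    and dense: "\<And>y. y \<in> topspace P \<Longrightarrow> y \<in> \<Inter>\<D> \<Longrightarrow> X closure_of range y = topspace X"
    using countable_dense_open_family_dense_coordinates[OF
        completely_metrizable_imp_metrizable_space[OF assms(1)] assms(2)]
    unfolding P_def by blast
  have "continuous_map P P (\<lambda>y i. T (y i))"
    unfolding P_def continuous_map_componentwise_UNIV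
    using continuous_map_compose[OF continuous_map_product_projection[of _ "UNIV :: nat set" "\<lambda>_. X"] T]
    by (simp add: o_def)
  moreover have "topologically_recurrent P (\<lambda>y i. T (y i))"
    unfolding P_def by (rule topologically_recurrent_diagonal[OF T rec])
  moreover have "M \<noteq> {}"
    using False P_metric unfolding P_def
    by (metis P.topspace_mtopology PiE_eq_empty_iff topspace_product_topology)
  ultimately obtain y s where y: "y \<in> \<Inter>\<D>" "y \<in> topspace P"
    and s: "strict_mono s" "\<forall>j. 0 < s j" "limitin P (\<lambda>j. ((\<lambda>y i. T (y i)) ^^ s j) y) y sequentially"
    using P.exists_rigid_point_in_dense_Inter[OF \<open>P.mcomplete\<close> _ _ _ \<open>countable \<D>\<close>] \<D>
    unfolding P_metric by (metis P.topspace_mtopology)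
  have "limitin X (\<lambda>j. (T ^^ s j) (y i)) (y i) sequentially" for i
    using s(3) unfolding P_def limitin_componentwise funpow_diagonal by simp
  moreover have "range y \<subseteq> topspace X"
    using y(2) unfolding P_def by auto
  ultimately show ?thesis
    unfolding quasi_rigid_def using s(1,2) dense[OF y(2,1)]
    by (intro exI[of _ s] exI[of _ "range y"]) auto
qed

theorem mainTheorem3:
  fixes X :: "'a topology" and T :: "'a \<Rightarrow> 'a"
  assumes "completely_metrizable_space X" and "separable_space X"
    and "continuous_map X X T"
  shows "(quasi_rigid X T \<longleftrightarrow> topologically_quasi_rigid X T)
       \<and> (topologically_quasi_rigid X T \<longleftrightarrow>
            (\<forall>N\<ge>1. topologically_recurrent (power_top X N) (power_map T N)))
       \<and> ((\<forall>N\<ge>1. topologically_recurrent (power_top X N) (power_map T N)) \<longleftrightarrow>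
            (\<forall>N\<ge>1. recurrent_map (power_top X N) (power_map T N)))"
proof -
  have i_ii: "quasi_rigid X T \<Longrightarrow> topologically_quasi_rigid X T"
    by (rule quasi_rigid_imp_topologically_quasi_rigid)
  have ii_iii: "topologically_quasi_rigid X T \<Longrightarrow>
      topologically_recurrent (power_top X N) (power_map T N)" for N
    by (intro topologically_quasi_rigid_imp_topologically_recurrent
        topologically_quasi_rigid_power_map)
  have iii_i: "\<forall>N\<ge>1. topologically_recurrent (power_top X N) (power_map T N) \<Longrightarrow> quasi_rigid X T"
    using quasi_rigid_if_powers_topologically_recurrent assms by blast
  have i_iv: "quasi_rigid X T \<Longrightarrow> recurrent_map (power_top X N) (power_map T N)" for N
    by (intro quasi_rigid_imp_recurrent_map quasi_rigid_power_map)
  have iv_iii: "recurrent_map (power_top X N) (power_map T N) \<Longrightarrow>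
      topologically_recurrent (power_top X N) (power_map T N)" for N
    by (rule recurrent_map_imp_topologically_recurrent)
  show ?thesis
    using i_ii ii_iii iii_i i_iv iv_iii by blast
qed

end
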